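(* For every complex number $x$ there exists a unital $\mathbb{C}$-algebra automorphism $\tau_x$ of $\tilde{\mathcal{A}}_{conv.}$ which commutes with the left and right actions of $B$ on $\tilde{\mathcal{A}}_{conv.}$ (i.e. $\tau_x(SXT)=S\tau_x(X)T$ for $S,T\in B$, $X\in\tilde{\mathcal{A}}_{conv.}$) and satisfies $$\tau_x(a)=a+xb,\qquad \tau_x(b)=b,\qquad \tau_x(1)=1.$$
   Context: $\widehat{\mathcal{A}}$ is the algebra of formal power series $\sum_{p,q\ge0}\gamma_{p,q}a^pb^q$ in variables $a,b$ with $ab-ba=b^2$ (the $(a,b)$-adic completion of the polynomial algebra with this relation). $\tilde{\mathcal{A}}_{conv.}\subset\widehat{\mathcal{A}}$ is the subalgebra of series with $|\gamma_{p,q}|\le C_RR^{p+q}q!$ for some $R>1$, $C_R>0$. $B=\mathbb{C}\{\{b\}\}\subset\tilde{\mathcal{A}}_{conv.}$ is the subalgebra of series $\sum c_qb^q$ with $|c_q|\le CR^qq!$ for some $C,R$. *)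

theory Defs
  imports Complex_Main
begin

text \<open>Elements of the completed algebra are represented by their coefficients
  gamma p q in the normal-ordered expansion sum gamma p q a^p b^q
  (powers of a to the left of powers of b).\<close>

type_synonym aser = "nat \<Rightarrow> nat \<Rightarrow> complex"

definition aadd :: "aser \<Rightarrow> aser \<Rightarrow> aser" where
  "aadd f g = (\<lambda>p q. f p q + g p q)"

definition ascale :: "complex \<Rightarrow> aser \<Rightarrow> aser" where
  "ascale c f = (\<lambda>p q. c * f p q)"

text \<open>Multiplication from the relation ab - ba = b^2, i.e.
  b^q a^r = sum_k (r choose k) (-1)^k q(q+1)...(q+k-1) a^(r-k) b^(q+k).
  Hence (a^p b^q)(a^r b^s) = sum_k (r choose k)(-1)^k pochhammer q k a^(p+r-k) b^(q+k+s).\<close>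

definition amul :: "aser \<Rightarrow> aser \<Rightarrow> aser" where
  "amul f g = (\<lambda>m n.
     (\<Sum>p\<le>m+n. \<Sum>q\<le>n. \<Sum>r\<le>m+n. \<Sum>s\<le>n. \<Sum>k\<le>n.
        if p + r = m + k \<and> q + k + s = n
        then f p q * g r s * of_nat (r choose k) * (-1) ^ k * pochhammer (of_nat q) k
        else 0))"

definition aone :: aser where
  "aone = (\<lambda>p q. if p = 0 \<and> q = 0 then 1 else 0)"

definition agen :: aser where
  "agen = (\<lambda>p q. if p = 1 \<and> q = 0 then 1 else 0)"

definition bgen :: aser where
  "bgen = (\<lambda>p q. if p = 0 \<and> q = 1 then 1 else 0)"

definition Aconv :: "aser set" where
  "Aconv = {f. \<exists>R::real. R > 1 \<and> (\<exists>C::real. C > 0 \<and>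
      (\<forall>p q. norm (f p q) \<le> C * R ^ (p + q) * fact q))}"

definition Bset :: "aser set" where
  "Bset = {f. (\<forall>p q. p \<noteq> 0 \<longrightarrow> f p q = 0) \<and>
      (\<exists>C R::real. \<forall>q. norm (f 0 q) \<le> C * R ^ q * fact q)}"

end

theory Submission
  imports Defs
begin

text \<open>The algebra acts faithfully on the formal span of vectors \<open>e\<^sub>j\<close>, \<open>j \<in> \<complex>\<close>, by
  \<open>a e\<^sub>j = j e\<^sub>j\<^sub>+\<^sub>1\<close> and \<open>b e\<^sub>j = e\<^sub>j\<^sub>+\<^sub>1\<close>; this respects \<open>ab - ba = b\<^sup>2\<close>. In this picture the
  substitution \<open>a \<mapsto> a + x b\<close>, \<open>b \<mapsto> b\<close> is nothing but the relabelling \<open>e\<^sub>j \<mapsto> e\<^sub>j\<^sub>+\<^sub>x\<close>, so it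
  is multiplicative, with inverse the substitution for \<open>-x\<close>. It fixes every series in \<open>b\<close> alone,
  and its coefficients \<open>x(x-1)\<dots>(x-k+1)\<close> grow at most like \<open>(|x|+1)\<^sup>k k!\<close>, which the
  Gevrey factor \<open>q!\<close> in the definition of \<open>Aconv\<close> absorbs.\<close>

definition falling_factorial :: "'a::comm_ring_1 \<Rightarrow> nat \<Rightarrow> 'a" where
  "falling_factorial z k = (-1) ^ k * pochhammer (- z) k"

lemma falling_factorial_0 [simp]: "falling_factorial z 0 = 1"
  by (simp add: falling_factorial_def)

lemma falling_factorial_Suc: "falling_factorial z (Suc k) = falling_factorial z k * (z - of_nat k)"
  by (simp add: falling_factorial_def pochhammer_Suc algebra_simps)

lemma pochhammer_add_falling_factorial:
  fixes w z :: "'a::comm_ring_1"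
  shows "pochhammer (w + z) r =
    (\<Sum>k\<le>r. of_nat (r choose k) * falling_factorial z k * pochhammer (w + of_nat k) (r - k))"
proof (induction r arbitrary: w)
  case 0
  then show ?case by simp
next
  case (Suc r w)
  define G where "G k = falling_factorial z k * pochhammer (w + of_nat k) (Suc r - k)" for k
  have G_Suc: "G (Suc k) =
      falling_factorial z k * (z - of_nat k) * pochhammer (w + of_nat (Suc k)) (r - k)" for k
    by (simp add: G_def falling_factorial_Suc)
  have G_le: "G k = falling_factorial z k * ((w + of_nat k) * pochhammer (w + of_nat k + 1) (r - k))"
    if "k \<le> r" for k
    using that by (simp add: G_def Suc_diff_le pochhammer_rec)
  have "pochhammer (w + z) (Suc r) = (w + z) * pochhammer ((w + 1) + z) r"
    by (simp add: pochhammer_rec algebra_simps)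
  also have "\<dots> = (\<Sum>k\<le>r. of_nat (r choose k) * ((w + of_nat k) + (z - of_nat k)) *
      falling_factorial z k * pochhammer (w + of_nat k + 1) (r - k))"
    by (subst Suc) (simp add: sum_distrib_left algebra_simps)
  also have "\<dots> = (\<Sum>k\<le>r. of_nat (r choose k) * G k) + (\<Sum>k\<le>r. of_nat (r choose k) * G (Suc k))"
    by (simp add: G_le G_Suc sum.distrib[symmetric] algebra_simps)
  also have "(\<Sum>k\<le>r. of_nat (r choose k) * G k) = (\<Sum>k\<le>Suc r. of_nat (r choose k) * G k)"
    by (simp add: binomial_eq_0)
  also have "\<dots> = G 0 + (\<Sum>k\<le>r. of_nat (r choose Suc k) * G (Suc k))"
    by (simp only: sum.atMost_Suc_shift) simp
  also have "G 0 + (\<Sum>k\<le>r. of_nat (r choose Suc k) * G (Suc k)) +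
      (\<Sum>k\<le>r. of_nat (r choose k) * G (Suc k)) = (\<Sum>k\<le>Suc r. of_nat (Suc r choose k) * G k)"
    by (subst sum.atMost_Suc_shift) (simp add: sum.distrib algebra_simps)
  finally show ?case unfolding G_def by (simp add: mult.assoc)
qed

lemma norm_falling_factorial_le: "norm (falling_factorial (z::complex) k) \<le> (norm z + 1) ^ k * fact k"
proof (induction k)
  case 0
  then show ?case by simp
next
  case (Suc k)
  have "norm (z - of_nat k) \<le> norm z + of_nat k"
    using norm_triangle_ineq4[of z "of_nat k"] by simp
  also have "\<dots> \<le> (norm z + 1) * (of_nat k + 1)"
    by (simp add: algebra_simps)
  finally have "norm (z - of_nat k) \<le> (norm z + 1) * (of_nat k + 1)" .
  then have "norm (falling_factorial z k) * norm (z - of_nat k) \<le>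
      ((norm z + 1) ^ k * fact k) * ((norm z + 1) * (of_nat k + 1))"
    by (intro mult_mono Suc.IH) auto
  also have "\<dots> = (norm z + 1) ^ Suc k * fact (Suc k)"
    by (simp add: algebra_simps)
  finally show ?case
    by (simp add: falling_factorial_Suc norm_mult)
qed

lemma sum_triangle_swap:
  fixes h :: "nat \<Rightarrow> nat \<Rightarrow> 'a::comm_monoid_add"
  shows "(\<Sum>m\<le>N. \<Sum>k\<le>N - m. h m k) = (\<Sum>p\<le>N. \<Sum>k\<le>p. h (p - k) k)"
proof -
  have "(\<Sum>m\<le>N. \<Sum>k\<le>N - m. h m k) = (\<Sum>(m, k)\<in>{(m, k). m + k \<le> N}. h m k)"
    by (subst sum.Sigma) (auto intro!: sum.cong)
  also have "\<dots> = (\<Sum>p\<le>N. \<Sum>m\<le>p. h m (p - m))"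
    by (rule sum.triangle_reindex_eq)
  also have "\<dots> = (\<Sum>p\<le>N. \<Sum>k\<le>p. h (p - k) k)"
  proof (rule sum.cong[OF refl])
    show "(\<Sum>m\<le>p. h m (p - m)) = (\<Sum>k\<le>p. h (p - k) k)" for p
      by (rule sum.reindex_bij_witness[where i="\<lambda>k. p - k" and j="\<lambda>k. p - k"]) auto
  qed
  finally show ?thesis .
qed

text \<open>Since \<open>a\<^sup>p b\<^sup>q e\<^sub>j = pochhammer (j + q) p e\<^sub>j\<^sub>+\<^sub>p\<^sub>+\<^sub>q\<close>, \<open>rep_coeff f N j\<close> is the coefficient
  of \<open>e\<^sub>j\<^sub>+\<^sub>N\<close> in \<open>f e\<^sub>j\<close>.\<close>

definition rep_coeff :: "aser \<Rightarrow> nat \<Rightarrow> complex \<Rightarrow> complex" where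
  "rep_coeff f N j = (\<Sum>p\<le>N. f p (N - p) * pochhammer (j + of_nat (N - p)) p)"

text \<open>The substitution \<open>a \<mapsto> a + x b\<close>, \<open>b \<mapsto> b\<close> on normal-ordered series, using
  \<open>(a + x b)\<^sup>p = (\<Sum>k\<le>p. (p choose k) * falling_factorial x k * a\<^sup>p\<^sup>-\<^sup>k b\<^sup>k)\<close>.\<close>

definition shift_aut :: "complex \<Rightarrow> aser \<Rightarrow> aser" where
  "shift_aut x f = (\<lambda>m n. \<Sum>k\<le>n. of_nat ((m + k) choose k) * falling_factorial x k * f (m + k) (n - k))"

lemma rep_coeff_shift_aut: "rep_coeff (shift_aut x f) N j = rep_coeff f N (j + x)"
proof -
  define h where "h m k = of_nat ((m + k) choose k) * falling_factorial x k * f (m + k) (N - m - k) *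
      pochhammer (j + of_nat (N - m)) m" for m k
  have "rep_coeff (shift_aut x f) N j = (\<Sum>m\<le>N. \<Sum>k\<le>N - m. h m k)"
    unfolding rep_coeff_def shift_aut_def h_def by (simp add: sum_distrib_right)
  also have "\<dots> = (\<Sum>p\<le>N. \<Sum>k\<le>p. h (p - k) k)"
    by (rule sum_triangle_swap)
  also have "\<dots> = (\<Sum>p\<le>N. f p (N - p) * pochhammer ((j + of_nat (N - p)) + x) p)"
  proof (intro sum.cong refl)
    fix p assume p: "p \<in> {..N}"
    show "(\<Sum>k\<le>p. h (p - k) k) = f p (N - p) * pochhammer ((j + of_nat (N - p)) + x) p"
      unfolding pochhammer_add_falling_factorial[of "j + of_nat (N - p)" x p] sum_distrib_left
    proof (intro sum.cong refl)
      fix k assume k: "k \<in> {..p}"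
      then have "p - k + k = p" "N - (p - k) = N - p + k"
        using p by auto
      then show "h (p - k) k = f p (N - p) * (of_nat (p choose k) * falling_factorial x k *
          pochhammer (j + of_nat (N - p) + of_nat k) (p - k))"
        unfolding h_def by (simp only: diff_diff_left of_nat_add) (simp add: mult_ac add_ac)
    qed
  qed
  also have "\<dots> = rep_coeff f N (j + x)"
    unfolding rep_coeff_def by (simp add: add_ac)
  finally show ?thesis .
qed

text \<open>Evaluating at \<open>j = m + 1 - N\<close> kills the terms with \<open>i > m\<close>, so the
  coefficients of degree \<open>N\<close> are determined one after another.\<close>

lemma rep_coeff_faithful:
  assumes "\<And>N j. rep_coeff f N j = rep_coeff g N j"
  shows "f = g"
proof (intro ext)
  fix p q :: nat
  define N where "N = p + q"
  define d where "d i = f i (N - i) - g i (N - i)" for i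
  have sum_d: "(\<Sum>i\<le>N. d i * pochhammer (j + of_nat (N - i)) i) = 0" for j
    using assms[of N j] unfolding rep_coeff_def d_def
    by (simp add: sum_subtractf left_diff_distrib)
  have "d m = 0" if "m \<le> N" for m
    using that
  proof (induction m rule: less_induct)
    case (less m)
    define j :: complex where "j = of_nat (m + 1) - of_nat N"
    have summand: "d i * pochhammer (j + of_nat (N - i)) i = (if i = m then d m * fact m else 0)"
      if "i \<le> N" for i
    proof -
      have ji: "j + of_nat (N - i) = of_nat (m + 1) - of_nat i"
        using that by (simp add: j_def of_nat_diff)
      consider "i < m" | "i = m" | "m < i" by linarith
      then show ?thesis
      proof cases
        case 1
        then show ?thesis using less that by auto
      next
        case 2
        then show ?thesis unfolding ji by (simp add: pochhammer_fact)
      next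
        case 3
        then have "of_nat (m + 1) - of_nat i = - (of_nat (i - m - 1) :: complex)"
          by (simp add: of_nat_diff)
        moreover have "pochhammer (- (of_nat (i - m - 1) :: complex)) i = 0"
          using 3 by (intro pochhammer_of_nat_eq_0_lemma) simp
        ultimately have "pochhammer (of_nat (m + 1) - of_nat i :: complex) i = 0"
          by simp
        then show ?thesis
          using 3 unfolding ji by simp
      qed
    qed
    have "0 = (\<Sum>i\<le>N. d i * pochhammer (j + of_nat (N - i)) i)"
      using sum_d by simp
    also have "\<dots> = (\<Sum>i\<le>N. if i = m then d m * fact m else 0)"
      using summand by (intro sum.cong) auto
    also have "\<dots> = d m * fact m"
      using less.prems by simp
    finally show "d m = 0" by simp
  qed
  from this[of p] show "f p q = g p q"
    unfolding d_def N_def by simp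
qed

lemma sum_if_unique_index:
  assumes "finite A" "\<And>i. i \<in> A \<Longrightarrow> P i \<longleftrightarrow> i = i0 \<and> Q" "Q \<Longrightarrow> i0 \<in> A"
  shows "(\<Sum>i\<in>A. if P i then F i else 0) = (if Q then F i0 else 0)"
proof -
  have "(\<Sum>i\<in>A. if P i then F i else 0) = (\<Sum>i\<in>A. if i = i0 then (if Q then F i0 else 0) else 0)"
    using assms(2) by (intro sum.cong) auto
  also have "\<dots> = (if Q then F i0 else 0)"
    using assms(1,3) by simp
  finally show ?thesis .
qed

lemma sum_antidiagonal_eq_box:
  fixes h :: "nat \<Rightarrow> nat \<Rightarrow> 'a::comm_monoid_add"
  assumes "n \<le> N"
  shows "(\<Sum>p\<le>n. h p (n - p)) = (\<Sum>p\<le>N. \<Sum>q\<le>N. if p + q = n then h p q else 0)"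
proof -
  have "(\<Sum>q\<le>N. if p + q = n then h p q else 0) = (if p \<le> n then h p (n - p) else 0)" for p
    using assms by (intro sum_if_unique_index) auto
  then have "(\<Sum>p\<le>N. \<Sum>q\<le>N. if p + q = n then h p q else 0) = (\<Sum>p\<le>N. if p \<le> n then h p (n - p) else 0)"
    by simp
  also have "\<dots> = (\<Sum>p\<le>n. h p (n - p))"
    using assms by (intro sum.mono_neutral_cong_right) auto
  finally show ?thesis by simp
qed

lemma amul_eq_box:
  assumes "m \<le> N"
  shows "amul f g m (N - m) = (\<Sum>p\<le>N. \<Sum>q\<le>N. \<Sum>r\<le>N. \<Sum>s\<le>N. \<Sum>k\<le>N.
    if p + r = m + k \<and> q + k + s = N - m
    then f p q * g r s * of_nat (r choose k) * (-1) ^ k * pochhammer (of_nat q) k else 0)"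
proof -
  have extend: "(\<Sum>i\<le>N - m. F i) = (\<Sum>i\<le>N. F i)" if "\<And>i. N - m < i \<Longrightarrow> F i = 0"
    for F :: "nat \<Rightarrow> complex"
    using that by (intro sum.mono_neutral_left) auto
  show ?thesis
    unfolding amul_def using assms
    by (simp add: extend)
qed

text \<open>Both sides compute \<open>a\<^sup>p b\<^sup>q a\<^sup>r b\<^sup>s e\<^sub>j\<close>: the left one through the normal-ordering
  rule built into \<open>amul\<close>, the right one directly.\<close>

lemma pochhammer_normal_ordering:
  fixes j :: "'a::comm_ring_1"
  shows "(\<Sum>k\<le>r. of_nat (r choose k) * (-1) ^ k * pochhammer (of_nat q) k *
      pochhammer (j + of_nat (q + s + k)) (p + r - k))
    = pochhammer (j + of_nat (q + r + s)) p * pochhammer (j + of_nat s) r"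
proof -
  have "pochhammer (j + of_nat (q + s + k)) (p + r - k) =
      pochhammer (j + of_nat (q + s) + of_nat k) (r - k) * pochhammer (j + of_nat (q + r + s)) p"
    if "k \<le> r" for k
  proof -
    have "p + r - k = (r - k) + p" and "q + s + k + (r - k) = q + r + s"
      using that by auto
    then show ?thesis
      by (simp only: pochhammer_product' add.assoc of_nat_add[symmetric])
  qed
  then have "(\<Sum>k\<le>r. of_nat (r choose k) * (-1) ^ k * pochhammer (of_nat q) k *
      pochhammer (j + of_nat (q + s + k)) (p + r - k))
    = pochhammer (j + of_nat (q + r + s)) p * (\<Sum>k\<le>r. of_nat (r choose k) *
      falling_factorial (- of_nat q) k * pochhammer (j + of_nat (q + s) + of_nat k) (r - k))"
    by (simp add: sum_distrib_left falling_factorial_def mult_ac)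
  also have "\<dots> = pochhammer (j + of_nat (q + r + s)) p * pochhammer (j + of_nat s) r"
    by (simp add: pochhammer_add_falling_factorial[symmetric])
  finally show ?thesis .
qed

lemma rep_coeff_amul_expand:
  "rep_coeff (amul f g) N j = (\<Sum>p\<le>N. \<Sum>q\<le>N. \<Sum>r\<le>N. \<Sum>s\<le>N.
     if p + q + r + s = N then f p q * g r s * (\<Sum>k\<le>r. of_nat (r choose k) * (-1) ^ k *
       pochhammer (of_nat q) k * pochhammer (j + of_nat (q + s + k)) (p + r - k))
     else 0)"
proof -
  define T where "T p q r s k = f p q * g r s * of_nat (r choose k) * (-1) ^ k * pochhammer (of_nat q) k"
    for p q r s k
  define P where "P m = pochhammer (j + of_nat (N - m)) m" for m
  have "rep_coeff (amul f g) N j = (\<Sum>m\<le>N. \<Sum>p\<le>N. \<Sum>q\<le>N. \<Sum>r\<le>N. \<Sum>s\<le>N. \<Sum>k\<le>N.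
      if p + r = m + k \<and> q + k + s = N - m then T p q r s k * P m else 0)"
    unfolding rep_coeff_def T_def P_def
    by (intro sum.cong refl)
      (simp add: amul_eq_box sum_distrib_right if_distrib[where f="\<lambda>y. y * c" for c]
        cong: if_cong del: of_nat_diff)
  also have "\<dots> = (\<Sum>p\<le>N. \<Sum>q\<le>N. \<Sum>r\<le>N. \<Sum>s\<le>N. \<Sum>k\<le>N. \<Sum>m\<le>N.
      if p + r = m + k \<and> q + k + s = N - m then T p q r s k * P m else 0)"
    by (subst sum.swap, rule sum.cong[OF refl])+ (rule refl)
  also have "\<dots> = (\<Sum>p\<le>N. \<Sum>q\<le>N. \<Sum>r\<le>N. \<Sum>s\<le>N. \<Sum>k\<le>N.
      if k \<le> p + r \<and> p + q + r + s = N then T p q r s k * P (p + r - k) else 0)"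
    by (intro sum.cong refl sum_if_unique_index) (simp_all, arith+)
  also have "\<dots> = (\<Sum>p\<le>N. \<Sum>q\<le>N. \<Sum>r\<le>N. \<Sum>s\<le>N.
     if p + q + r + s = N then f p q * g r s * (\<Sum>k\<le>r. of_nat (r choose k) * (-1) ^ k *
       pochhammer (of_nat q) k * pochhammer (j + of_nat (q + s + k)) (p + r - k))
     else 0)"
  proof (intro sum.cong refl)
    fix p q r s
    show "(\<Sum>k\<le>N. if k \<le> p + r \<and> p + q + r + s = N then T p q r s k * P (p + r - k) else 0)
      = (if p + q + r + s = N then f p q * g r s * (\<Sum>k\<le>r. of_nat (r choose k) * (-1) ^ k *
         pochhammer (of_nat q) k * pochhammer (j + of_nat (q + s + k)) (p + r - k)) else 0)"
    proof (cases "p + q + r + s = N")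
      case True
      have "P (p + r - k) = pochhammer (j + of_nat (q + s + k)) (p + r - k)" if "k \<le> r" for k
      proof -
        have "N - (p + r - k) = q + s + k"
          using True that by arith
        then show ?thesis
          unfolding P_def by simp
      qed
      then have "(\<Sum>k\<le>N. if k \<le> p + r \<and> p + q + r + s = N then T p q r s k * P (p + r - k) else 0)
        = (\<Sum>k\<le>r. T p q r s k * pochhammer (j + of_nat (q + s + k)) (p + r - k))"
        using True by (intro sum.mono_neutral_cong_right) (auto simp: T_def binomial_eq_0)
      then show ?thesis
        using True by (simp add: T_def sum_distrib_left mult_ac)
    qed simp
  qed
  finally show ?thesis .
qed

lemma rep_coeff_convolution_expand:
  "(\<Sum>M\<le>N. rep_coeff f (N - M) (j + of_nat M) * rep_coeff g M j) =
    (\<Sum>p\<le>N. \<Sum>q\<le>N. \<Sum>r\<le>N. \<Sum>s\<le>N.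
      if p + q + r + s = N
      then f p q * g r s * (pochhammer (j + of_nat (q + r + s)) p * pochhammer (j + of_nat s) r)
      else 0)"
proof -
  define F where "F p q M = f p q * pochhammer (j + of_nat M + of_nat q) p" for p q M
  define G where "G r s = g r s * pochhammer (j + of_nat s) r" for r s
  have f_box: "rep_coeff f (N - M) (j + of_nat M) =
      (\<Sum>p\<le>N. \<Sum>q\<le>N. if p + q = N - M then F p q M else 0)" for M
    unfolding rep_coeff_def F_def by (rule sum_antidiagonal_eq_box) simp
  have g_box: "rep_coeff g M j = (\<Sum>r\<le>N. \<Sum>s\<le>N. if r + s = M then G r s else 0)"
    if "M \<le> N" for M
    unfolding rep_coeff_def G_def using that by (rule sum_antidiagonal_eq_box)
  have "(\<Sum>M\<le>N. rep_coeff f (N - M) (j + of_nat M) * rep_coeff g M j) =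
      (\<Sum>M\<le>N. \<Sum>p\<le>N. \<Sum>r\<le>N. \<Sum>q\<le>N. \<Sum>s\<le>N.
        if r + s = M \<and> p + q = N - M then F p q M * G r s else 0)"
    by (intro sum.cong refl)
      (simp add: f_box g_box sum_product if_distrib[where f="\<lambda>y. y * c" for c]
        if_distrib[where f="\<lambda>y. c * y" for c] if_if_eq_conj cong: if_cong)
  also have "\<dots> = (\<Sum>p\<le>N. \<Sum>r\<le>N. \<Sum>q\<le>N. \<Sum>s\<le>N. \<Sum>M\<le>N.
        if r + s = M \<and> p + q = N - M then F p q M * G r s else 0)"
    by (subst sum.swap, rule sum.cong[OF refl])+ (rule refl)
  also have "\<dots> = (\<Sum>p\<le>N. \<Sum>r\<le>N. \<Sum>q\<le>N. \<Sum>s\<le>N.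
        if p + q + r + s = N then F p q (r + s) * G r s else 0)"
    by (intro sum.cong refl sum_if_unique_index) auto
  also have "\<dots> = (\<Sum>p\<le>N. \<Sum>q\<le>N. \<Sum>r\<le>N. \<Sum>s\<le>N.
      if p + q + r + s = N
      then f p q * g r s * (pochhammer (j + of_nat (q + r + s)) p * pochhammer (j + of_nat s) r)
      else 0)"
    by (rule sum.cong[OF refl], rule sum.swap[THEN trans]) (simp add: F_def G_def mult_ac add_ac cong: if_cong)
  finally show ?thesis .
qed

lemma rep_coeff_amul:
  "rep_coeff (amul f g) N j = (\<Sum>M\<le>N. rep_coeff f (N - M) (j + of_nat M) * rep_coeff g M j)"
  by (simp only: rep_coeff_amul_expand rep_coeff_convolution_expand pochhammer_normal_ordering)

lemma shift_aut_amul: "shift_aut x (amul f g) = amul (shift_aut x f) (shift_aut x g)"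
  by (rule rep_coeff_faithful) (simp add: rep_coeff_shift_aut rep_coeff_amul add_ac)

lemma shift_aut_inverse: "shift_aut (- x) (shift_aut x f) = f"
  by (rule rep_coeff_faithful) (simp add: rep_coeff_shift_aut)

lemma shift_aut_aadd: "shift_aut x (aadd f g) = aadd (shift_aut x f) (shift_aut x g)"
  unfolding shift_aut_def aadd_def by (simp add: sum.distrib algebra_simps)

lemma shift_aut_ascale: "shift_aut x (ascale c f) = ascale c (shift_aut x f)"
  unfolding shift_aut_def ascale_def by (simp add: sum_distrib_left algebra_simps)

lemma shift_aut_fixes_b_series:
  assumes "\<And>p q. p \<noteq> 0 \<Longrightarrow> S p q = 0"
  shows "shift_aut x S = S"
proof (intro ext)
  fix m n
  have "shift_aut x S m n = (\<Sum>k\<le>n. if k = 0 then S m n else 0)"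
    unfolding shift_aut_def using assms by (intro sum.cong) auto
  then show "shift_aut x S m n = S m n"
    by simp
qed

lemma shift_aut_agen: "shift_aut x agen = aadd agen (ascale x bgen)"
proof (intro ext)
  fix m n
  have "shift_aut x agen m n =
      (\<Sum>k\<le>n. if m + k = 1 \<and> n - k = 0 then of_nat ((m + k) choose k) * falling_factorial x k else 0)"
    unfolding shift_aut_def agen_def by (simp add: if_distrib[where f="\<lambda>y. c * y" for c] cong: if_cong)
  also have "\<dots> = (if m + n = 1 then of_nat ((m + n) choose n) * falling_factorial x n else 0)"
    by (rule sum_if_unique_index) auto
  also have "\<dots> = aadd agen (ascale x bgen) m n"
    by (cases m; cases n) (auto simp: agen_def bgen_def aadd_def ascale_def falling_factorial_def)
  finally show "shift_aut x agen m n = aadd agen (ascale x bgen) m n" .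
qed

lemma norm_shift_aut_term_le:
  fixes x :: complex
  assumes bound: "\<And>p q. norm (f p q) \<le> C * R ^ (p + q) * fact q"
    and "C \<ge> 0" "R \<ge> 0" "k \<le> n"
  shows "norm (of_nat ((m + k) choose k) * falling_factorial x k * f (m + k) (n - k))
    \<le> C * (2 * R * (norm x + 1)) ^ (m + n) * fact n"
proof -
  define X where "X = norm x + 1"
  have "(m + k) choose k \<le> (2::nat) ^ (m + n)"
    using binomial_le_pow2[of "m + k" k] power_increasing[of "m + k" "m + n" "2::nat"] \<open>k \<le> n\<close>
    by linarith
  then have binom: "real ((m + k) choose k) \<le> 2 ^ (m + n)"
    by (metis of_nat_le_iff of_nat_numeral of_nat_power)
  have "norm (falling_factorial x k) \<le> X ^ k * fact k"
    unfolding X_def by (rule norm_falling_factorial_le)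
  also have "\<dots> \<le> X ^ (m + n) * fact k"
    using \<open>k \<le> n\<close> by (intro mult_right_mono power_increasing) (auto simp: X_def)
  finally have ffact: "norm (falling_factorial x k) \<le> X ^ (m + n) * fact k" .
  have coeff: "norm (f (m + k) (n - k)) \<le> C * R ^ (m + n) * fact (n - k)"
    using bound[of "m + k" "n - k"] \<open>k \<le> n\<close> by simp
  have "fact k * fact (n - k) \<le> (fact n :: nat)"
    using fact_fact_dvd_fact[of k "n - k"] \<open>k \<le> n\<close> by (auto intro: dvd_imp_le)
  then have facts: "fact k * fact (n - k) \<le> (fact n :: real)"
    by (metis of_nat_fact of_nat_le_iff of_nat_mult)
  have "norm (of_nat ((m + k) choose k) * falling_factorial x k * f (m + k) (n - k))
      \<le> 2 ^ (m + n) * (X ^ (m + n) * fact k) * (C * R ^ (m + n) * fact (n - k))"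
    unfolding norm_mult norm_of_nat using assms X_def
    by (intro mult_mono binom ffact coeff) auto
  also have "\<dots> = C * (2 * R * X) ^ (m + n) * (fact k * fact (n - k))"
    by (simp add: power_mult_distrib algebra_simps)
  also have "\<dots> \<le> C * (2 * R * X) ^ (m + n) * fact n"
    using assms X_def facts by (intro mult_left_mono) auto
  finally show ?thesis
    unfolding X_def .
qed

lemma shift_aut_Aconv:
  assumes "f \<in> Aconv"
  shows "shift_aut x f \<in> Aconv"
proof -
  from assms obtain R C :: real where "R > 1" "C > 0"
    and bound: "\<And>p q. norm (f p q) \<le> C * R ^ (p + q) * fact q"
    unfolding Aconv_def by blast
  define R' where "R' = 2 * (2 * R * (norm x + 1))"
  have "R \<le> R * (norm x + 1)"
    using \<open>R > 1\<close> by (simp add: mult_le_cancel_left1)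
  then have "R' > 1"
    using \<open>R > 1\<close> unfolding R'_def by linarith
  have "norm (shift_aut x f m n) \<le> C * R' ^ (m + n) * fact n" for m n
  proof -
    have "Suc n \<le> (2::nat) ^ (m + n)"
      using less_exp[of n] power_increasing[of n "m + n" "2::nat"] by linarith
    then have size: "real (Suc n) \<le> 2 ^ (m + n)"
      by (metis of_nat_le_iff of_nat_numeral of_nat_power)
    have "norm (shift_aut x f m n) \<le> (\<Sum>k\<le>n. C * (2 * R * (norm x + 1)) ^ (m + n) * fact n)"
      unfolding shift_aut_def using \<open>R > 1\<close> \<open>C > 0\<close>
      by (intro norm_sum[THEN order_trans] sum_mono norm_shift_aut_term_le[OF bound]) auto
    also have "\<dots> = real (Suc n) * (C * (2 * R * (norm x + 1)) ^ (m + n) * fact n)"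
      by simp
    also have "\<dots> \<le> 2 ^ (m + n) * (C * (2 * R * (norm x + 1)) ^ (m + n) * fact n)"
      using \<open>R > 1\<close> \<open>C > 0\<close> by (intro mult_right_mono size) auto
    also have "\<dots> = C * R' ^ (m + n) * fact n"
      unfolding R'_def by (simp only: power_mult_distrib mult_ac)
    finally show ?thesis .
  qed
  then show ?thesis
    unfolding Aconv_def using \<open>R' > 1\<close> \<open>C > 0\<close> by blast
qed

theorem proposition1p2p1:
  fixes x :: complex
  shows "\<exists>\<tau>. bij_betw \<tau> Aconv Aconv \<and>
    (\<forall>f\<in>Aconv. \<forall>g\<in>Aconv. \<tau> (aadd f g) = aadd (\<tau> f) (\<tau> g)) \<and>
    (\<forall>c. \<forall>f\<in>Aconv. \<tau> (ascale c f) = ascale c (\<tau> f)) \<and>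
    (\<forall>f\<in>Aconv. \<forall>g\<in>Aconv. \<tau> (amul f g) = amul (\<tau> f) (\<tau> g)) \<and>
    \<tau> aone = aone \<and>
    (\<forall>S\<in>Bset. \<forall>T\<in>Bset. \<forall>X\<in>Aconv. \<tau> (amul (amul S X) T) = amul (amul S (\<tau> X)) T) \<and>
    \<tau> agen = aadd agen (ascale x bgen) \<and>
    \<tau> bgen = bgen"
proof (intro exI[of _ "shift_aut x"] conjI ballI allI)
  show "bij_betw (shift_aut x) Aconv Aconv"
    using shift_aut_inverse[of x] shift_aut_inverse[of "- x"] shift_aut_Aconv
    by (intro bij_betw_byWitness[where f'="shift_aut (- x)"]) auto
  have B_fixed: "shift_aut x S = S" if "S \<in> Bset" for S
    using that unfolding Bset_def by (intro shift_aut_fixes_b_series) auto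
  show "shift_aut x (amul (amul S X) T) = amul (amul S (shift_aut x X)) T"
    if "S \<in> Bset" "T \<in> Bset" for S T X
    using that by (simp add: shift_aut_amul B_fixed)
  show "shift_aut x aone = aone" "shift_aut x bgen = bgen"
    by (auto intro!: shift_aut_fixes_b_series simp: aone_def bgen_def)
qed (simp_all add: shift_aut_aadd shift_aut_ascale shift_aut_amul shift_aut_agen)

end
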